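(* If $M$ is typable in $\lambda^{\triangleright}$ (i.e. $\Gamma\vdash^A M:\tau$ for some $\Gamma,A,\tau$), then there is no infinite reduction sequence $M\to N_1\to N_2\to\cdots$.
   Context: Calculus $\lambda^{\triangleright}$. Let $\mathcal{G}$ be a countably infinite set of transition variables $\alpha,\beta,\dots$. A transition (or stage) $A,B$ is a finite sequence of transition variables; $\varepsilon$ is the empty sequence and $AB$ is concatenation. Types: $\tau ::= b \mid \tau\to\tau \mid \triangleright_\alpha\tau \mid \forall\alpha.\tau$ ($b$ ranges over base types; $\alpha$ is bound in $\forall\alpha.\tau$). Terms: $M ::= x \mid M\,M \mid \lambda x{:}\tau.M \mid \blacktriangleright_\alpha M \mid \blacktriangleleft_\alpha M \mid \Lambda\alpha.M \mid M\,A$ (quotation, unquotation, transition abstraction, and instantiation by a transition $A$); $x$ is bound in $\lambda x{:}\tau.M$ and $\alpha$ in $\Lambda\alpha.M$; bound variables are tacitly renamed. For $A=\alpha_1\cdots\alpha_n$ write $\triangleright_A\tau=\triangleright_{\alpha_1}\cdots\triangleright_{\alpha_n}\tau$, $\blacktriangleright_A M=\blacktriangleright_{\alpha_1}\cdots\blacktriangleright_{\alpha_n}M$, and $\blacktriangleleft_A M=\blacktriangleleft_{\alpha_n}\cdots\blacktriangleleft_{\alpha_1}M$ (all three are the identity when $A=\varepsilon$). Capture-avoiding substitution $\tau[\alpha:=B]$, $M[\alpha:=B]$, $A[\alpha:=B]$ of a transition for a transition variable replaces $\alpha$ by $B$ in transitions and replaces $\triangleright_\alpha,\blacktriangleright_\alpha,\blacktriangleleft_\alpha$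 by $\triangleright_B,\blacktriangleright_B,\blacktriangleleft_B$ respectively. $M[x:=N]$ is capture-avoiding term substitution. $\mathrm{FTV}$ denotes free transition variables. A context $\Gamma$ is a finite set $\{x_1:\tau_1@A_1,\dots,x_n:\tau_n@A_n\}$ with distinct $x_i$; $\mathrm{FTV}(\Gamma)=\bigcup_i(\mathrm{FTV}(\tau_i)\cup\mathrm{FTV}(A_i))$. Typing judgments $\Gamma\vdash^A M:\tau$ are derived by: (Var) $x:\tau@A\in\Gamma \Rightarrow \Gamma\vdash^A x:\tau$; (Abs) $\Gamma,x:\tau@A\vdash^A M:\sigma \Rightarrow \Gamma\vdash^A\lambda x{:}\tau.M:\tau\to\sigma$; (App) $\Gamma\vdash^A M:\tau\to\sigma$ and $\Gamma\vdash^A N:\tau$ $\Rightarrow \Gamma\vdash^A M\,N:\sigma$; (Quote) $\Gamma\vdash^{A\alpha}M:\tau \Rightarrow \Gamma\vdash^A\blacktriangleright_\alpha M:\triangleright_\alpha\tau$; (Unquote) $\Gamma\vdash^A M:\triangleright_\alpha\tau \Rightarrow \Gamma\vdash^{A\alpha}\blacktriangleleft_\alpha M:\tau$; (Gen) $\Gamma\vdash^A M:\tau$ and $\alpha\notin\mathrm{FTV}(\Gamma)\cup\mathrm{FTV}(A)$ $\Rightarrow \Gamma\vdash^A\Lambda\alpha.M:\forall\alpha.\tau$; (Ins) $\Gamma\vdash^A M:\forall\alpha.\tau \Rightarrow \Gamma\vdash^A M\,B:\tau[\alpha:=B]$. Reduction $M\to N$ is the least relation closed under all term constructors (reduction may occur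 anywhere, including under binders and quotations) containing $(\lambda x{:}\tau.M)\,N\to M[x:=N]$, $\blacktriangleleft_\alpha\blacktriangleright_\alpha M\to M$, and $(\Lambda\alpha.M)\,A\to M[\alpha:=A]$. *)

theory Defs
  imports Main
begin

(* Transition variables: de Bruijn indices (nat); bound by \<forall> (types) and \<Lambda> (terms). *)

type_synonym trans = "nat list"

datatype ty = Base nat | Arr ty ty | Later nat ty | All ty

datatype trm = Var nat | App trm trm | Lam ty trm
  | Quote nat trm | Unquote nat trm | TLam trm | TApp trm trans

fun laters :: "trans \<Rightarrow> ty \<Rightarrow> ty" where
  "laters [] t = t"
| "laters (a # as) t = Later a (laters as t)"

fun quotes :: "trans \<Rightarrow> trm \<Rightarrow> trm" where
  "quotes [] m = m"
| "quotes (a # as) m = Quote a (quotes as m)"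

(* unquotes [a1,...,an] M = \<blacktriangleleft>_an ... \<blacktriangleleft>_a1 M *)
fun unquotes :: "trans \<Rightarrow> trm \<Rightarrow> trm" where
  "unquotes [] m = m"
| "unquotes (a # as) m = unquotes as (Unquote a m)"

definition shift_tv :: "nat \<Rightarrow> nat \<Rightarrow> nat" where
  "shift_tv k n = (if n < k then n else Suc n)"

definition dec_tv :: "nat \<Rightarrow> nat \<Rightarrow> nat" where
  "dec_tv k n = (if n < k then n else n - 1)"

definition shiftA :: "nat \<Rightarrow> trans \<Rightarrow> trans" where
  "shiftA k A = map (shift_tv k) A"

definition substA :: "nat \<Rightarrow> trans \<Rightarrow> trans \<Rightarrow> trans" where
  "substA k B A = concat (map (\<lambda>n. if n = k then B else [dec_tv k n]) A)"

fun tshift :: "nat \<Rightarrow> ty \<Rightarrow> ty" where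
  "tshift k (Base b) = Base b"
| "tshift k (Arr s t) = Arr (tshift k s) (tshift k t)"
| "tshift k (Later a t) = Later (shift_tv k a) (tshift k t)"
| "tshift k (All t) = All (tshift (Suc k) t)"

fun tsubst :: "nat \<Rightarrow> trans \<Rightarrow> ty \<Rightarrow> ty" where
  "tsubst k B (Base b) = Base b"
| "tsubst k B (Arr s t) = Arr (tsubst k B s) (tsubst k B t)"
| "tsubst k B (Later a t) =
     (if a = k then laters B (tsubst k B t) else Later (dec_tv k a) (tsubst k B t))"
| "tsubst k B (All t) = All (tsubst (Suc k) (shiftA 0 B) t)"

fun mshiftT :: "nat \<Rightarrow> trm \<Rightarrow> trm" where
  "mshiftT k (Var i) = Var i"
| "mshiftT k (App m n) = App (mshiftT k m) (mshiftT k n)"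
| "mshiftT k (Lam t m) = Lam (tshift k t) (mshiftT k m)"
| "mshiftT k (Quote a m) = Quote (shift_tv k a) (mshiftT k m)"
| "mshiftT k (Unquote a m) = Unquote (shift_tv k a) (mshiftT k m)"
| "mshiftT k (TLam m) = TLam (mshiftT (Suc k) m)"
| "mshiftT k (TApp m A) = TApp (mshiftT k m) (shiftA k A)"

fun msubstT :: "nat \<Rightarrow> trans \<Rightarrow> trm \<Rightarrow> trm" where
  "msubstT k B (Var i) = Var i"
| "msubstT k B (App m n) = App (msubstT k B m) (msubstT k B n)"
| "msubstT k B (Lam t m) = Lam (tsubst k B t) (msubstT k B m)"
| "msubstT k B (Quote a m) =
     (if a = k then quotes B (msubstT k B m) else Quote (dec_tv k a) (msubstT k B m))"
| "msubstT k B (Unquote a m) =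
     (if a = k then unquotes B (msubstT k B m) else Unquote (dec_tv k a) (msubstT k B m))"
| "msubstT k B (TLam m) = TLam (msubstT (Suc k) (shiftA 0 B) m)"
| "msubstT k B (TApp m A) = TApp (msubstT k B m) (substA k B A)"

fun lift :: "nat \<Rightarrow> trm \<Rightarrow> trm" where
  "lift k (Var i) = (if i < k then Var i else Var (Suc i))"
| "lift k (App m n) = App (lift k m) (lift k n)"
| "lift k (Lam t m) = Lam t (lift (Suc k) m)"
| "lift k (Quote a m) = Quote a (lift k m)"
| "lift k (Unquote a m) = Unquote a (lift k m)"
| "lift k (TLam m) = TLam (lift k m)"
| "lift k (TApp m A) = TApp (lift k m) A"

fun subst :: "nat \<Rightarrow> trm \<Rightarrow> trm \<Rightarrow> trm" where
  "subst k N (Var i) = (if i = k then N else if i < k then Var i else Var (i - 1))"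
| "subst k N (App m n) = App (subst k N m) (subst k N n)"
| "subst k N (Lam t m) = Lam t (subst (Suc k) (lift 0 N) m)"
| "subst k N (Quote a m) = Quote a (subst k N m)"
| "subst k N (Unquote a m) = Unquote a (subst k N m)"
| "subst k N (TLam m) = TLam (subst k (mshiftT 0 N) m)"
| "subst k N (TApp m A) = TApp (subst k N m) A"

(* contexts: entry i is the type and stage of term variable i *)
type_synonym ctx = "(ty \<times> trans) list"

definition ctx_shift :: "ctx \<Rightarrow> ctx" where
  "ctx_shift G = map (\<lambda>(t, A). (tshift 0 t, shiftA 0 A)) G"

inductive typing :: "ctx \<Rightarrow> trans \<Rightarrow> trm \<Rightarrow> ty \<Rightarrow> bool" where
  T_Var: "i < length G \<Longrightarrow> G ! i = (t, A) \<Longrightarrow> typing G A (Var i) t"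
| T_Abs: "typing ((t, A) # G) A m s \<Longrightarrow> typing G A (Lam t m) (Arr t s)"
| T_App: "typing G A m (Arr t s) \<Longrightarrow> typing G A n t \<Longrightarrow> typing G A (App m n) s"
| T_Quote: "typing G (A @ [a]) m t \<Longrightarrow> typing G A (Quote a m) (Later a t)"
| T_Unquote: "typing G A m (Later a t) \<Longrightarrow> typing G (A @ [a]) (Unquote a m) t"
| T_Gen: "typing (ctx_shift G) (shiftA 0 A) m t \<Longrightarrow> typing G A (TLam m) (All t)"
| T_Ins: "typing G A m (All t) \<Longrightarrow> typing G A (TApp m B) (tsubst 0 B t)"

inductive red :: "trm \<Rightarrow> trm \<Rightarrow> bool" where
  beta: "red (App (Lam t m) n) (subst 0 n m)"
| qbeta: "red (Unquote a (Quote a m)) m"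
| tbeta: "red (TApp (TLam m) B) (msubstT 0 B m)"
| appL: "red m m' \<Longrightarrow> red (App m n) (App m' n)"
| appR: "red n n' \<Longrightarrow> red (App m n) (App m n')"
| lam: "red m m' \<Longrightarrow> red (Lam t m) (Lam t m')"
| quote: "red m m' \<Longrightarrow> red (Quote a m) (Quote a m')"
| unquote: "red m m' \<Longrightarrow> red (Unquote a m) (Unquote a m')"
| tlam: "red m m' \<Longrightarrow> red (TLam m) (TLam m')"
| tapp: "red m m' \<Longrightarrow> red (TApp m B) (TApp m' B)"

end

theory Submission
  imports Defs
begin

(* The proof erases a term to a pure lambda-term: quotation, unquotation,
   transition abstraction and transition instantiation are dropped, and types
   lose their modal and transition-quantifier layers.  Erasure maps typing
   derivations to simply-typed derivations, and every reduction step either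
   becomes a beta-step of the erasure or leaves the erasure unchanged while
   strictly decreasing the pair (number of transition binders/instantiations,
   number of quotations/unquotations) in the lexicographic order. *)


(* An element is strongly normalising for r if it is strongly normalising for a
   simulation image; this lets SN of a context (such as an application) be
   pulled back to the term in the hole. *)
lemma termip_reflect:
  assumes "\<And>x y. r x y \<Longrightarrow> r (f x) (f y)" and "termip r (f x)"
  shows "termip r x"
proof -
  have "termip r x" if "termip r z" "z = f x" for z x
    using that
  proof (induction arbitrary: x rule: accp.induct)
    case (accI z)
    then show ?case using assms(1) by (blast intro: accp.accI)
  qed
  then show ?thesis using assms(2) by blast
qed

lemma termip_simulation:
  assumes wf: "wf R"
    and step: "\<And>x y. r x y \<Longrightarrow> r' (f x) (f y) \<or> (f y = f x \<and> (g y, g x) \<in> R)"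
    and "termip r' (f x)"
  shows "termip r x"
proof -
  have "termip r x" if "termip r' z" "f x = z" for z x
    using that
  proof (induction arbitrary: x rule: accp.induct)
    case (accI z)
    show ?case using wf \<open>f x = z\<close>
    proof (induction "g x" arbitrary: x rule: wf_induct_rule)
      case less
      show ?case
      proof (rule accp.accI)
        fix y assume "r\<inverse>\<inverse> y x"
        with step consider "r' (f x) (f y)" | "f y = f x" "(g y, g x) \<in> R" by blast
        then show "termip r y"
        proof cases
          case 1 then show ?thesis using accI.IH less.prems by blast
        next
          case 2 then show ?thesis using less by simp
        qed
      qed
    qed
  qed
  then show ?thesis using assms(3) by blast
qed

lemma termip_no_infinite_chain:
  assumes "termip r x"
  shows "\<not> (\<exists>f. f 0 = x \<and> (\<forall>n. r (f n) (f (Suc n))))"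
  using assms
proof (induction rule: accp.induct)
  case (accI x)
  show ?case
  proof
    assume "\<exists>f. f 0 = x \<and> (\<forall>n. r (f n) (f (Suc n)))"
    then obtain f where "f 0 = x" and chain: "\<forall>n. r (f n) (f (Suc n))" by blast
    then have "r x (f 1)" by (metis One_nat_def)
    moreover have "\<exists>g. g 0 = f 1 \<and> (\<forall>n. r (g n) (g (Suc n)))"
      using chain by (intro exI[of _ "\<lambda>n. f (Suc n)"]) simp
    ultimately show False using accI.IH by simp
  qed
qed


datatype lam = LVar nat | LApp lam lam | LAbs lam

definition upr :: "(nat \<Rightarrow> nat) \<Rightarrow> nat \<Rightarrow> nat" where
  "upr \<rho> = case_nat 0 (Suc \<circ> \<rho>)"

primrec ren :: "(nat \<Rightarrow> nat) \<Rightarrow> lam \<Rightarrow> lam" where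
  "ren \<rho> (LVar i) = LVar (\<rho> i)"
| "ren \<rho> (LApp s t) = LApp (ren \<rho> s) (ren \<rho> t)"
| "ren \<rho> (LAbs t) = LAbs (ren (upr \<rho>) t)"

definition ups :: "(nat \<Rightarrow> lam) \<Rightarrow> nat \<Rightarrow> lam" where
  "ups \<sigma> = case_nat (LVar 0) (ren Suc \<circ> \<sigma>)"

primrec psubst :: "(nat \<Rightarrow> lam) \<Rightarrow> lam \<Rightarrow> lam" where
  "psubst \<sigma> (LVar i) = \<sigma> i"
| "psubst \<sigma> (LApp s t) = LApp (psubst \<sigma> s) (psubst \<sigma> t)"
| "psubst \<sigma> (LAbs t) = LAbs (psubst (ups \<sigma>) t)"

(* The laws of the sigma-calculus: composition of renamings and substitutions.
   The lifting case of each is the previous law. *)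
lemma ren_ren: "ren \<rho> (ren \<rho>' t) = ren (\<rho> \<circ> \<rho>') t"
proof (induction t arbitrary: \<rho> \<rho>')
  case (LAbs t)
  have "upr \<rho> \<circ> upr \<rho>' = upr (\<rho> \<circ> \<rho>')"
    by (auto simp: upr_def split: nat.split)
  with LAbs show ?case by (simp add: comp_def)
qed simp_all

lemma psubst_ren: "psubst \<sigma> (ren \<rho> t) = psubst (\<sigma> \<circ> \<rho>) t"
proof (induction t arbitrary: \<sigma> \<rho>)
  case (LAbs t)
  have "ups \<sigma> \<circ> upr \<rho> = ups (\<sigma> \<circ> \<rho>)"
    by (auto simp: ups_def upr_def split: nat.split)
  with LAbs show ?case by (simp add: comp_def)
qed simp_all

lemma ren_psubst: "ren \<rho> (psubst \<sigma> t) = psubst (ren \<rho> \<circ> \<sigma>) t"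
proof (induction t arbitrary: \<sigma> \<rho>)
  case (LAbs t)
  have "ren (upr \<rho>) \<circ> ups \<sigma> = ups (ren \<rho> \<circ> \<sigma>)"
    by (auto simp: ups_def upr_def ren_ren comp_def split: nat.split)
  with LAbs show ?case by (simp add: comp_def)
qed simp_all

lemma psubst_psubst: "psubst \<sigma> (psubst \<tau> t) = psubst (psubst \<sigma> \<circ> \<tau>) t"
proof (induction t arbitrary: \<sigma> \<tau>)
  case (LAbs t)
  have "psubst (ups \<sigma>) \<circ> ups \<tau> = ups (psubst \<sigma> \<circ> \<tau>)"
    by (auto simp: ups_def psubst_ren ren_psubst comp_def split: nat.split)
  with LAbs show ?case by (simp add: comp_def)
qed simp_all

lemma psubst_LVar [simp]: "psubst LVar t = t"
proof -
  have "ups LVar = LVar" by (auto simp: ups_def split: nat.split)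
  then show ?thesis by (induction t) simp_all
qed

definition single :: "nat \<Rightarrow> lam \<Rightarrow> nat \<Rightarrow> lam" where
  "single k u i = (if i < k then LVar i else if i = k then u else LVar (i - 1))"

inductive lbeta :: "lam \<Rightarrow> lam \<Rightarrow> bool" where
  beta: "lbeta (LApp (LAbs t) u) (psubst (single 0 u) t)"
| appL: "lbeta s s' \<Longrightarrow> lbeta (LApp s t) (LApp s' t)"
| appR: "lbeta t t' \<Longrightarrow> lbeta (LApp s t) (LApp s t')"
| abs: "lbeta t t' \<Longrightarrow> lbeta (LAbs t) (LAbs t')"

inductive_cases lbeta_LVarE [elim!]: "lbeta (LVar i) t'"
inductive_cases lbeta_LAbsE [elim!]: "lbeta (LAbs t) t'"
inductive_cases lbeta_LAppE: "lbeta (LApp s t) t'"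

lemma single_0_ups: "psubst (single 0 u) \<circ> ups \<sigma> = case_nat u \<sigma>"
  by (auto simp: ups_def single_def psubst_ren comp_def split: nat.split)

(* Beta-reduction is stable under substitution; the redex case is the
   substitution lemma in sigma-calculus form. *)
lemma lbeta_psubst: "lbeta t t' \<Longrightarrow> lbeta (psubst \<sigma> t) (psubst \<sigma> t')"
proof (induction t t' arbitrary: \<sigma> rule: lbeta.induct)
  case (beta t u)
  have "psubst \<sigma> \<circ> single 0 u = psubst (single 0 (psubst \<sigma> u)) \<circ> ups \<sigma>"
    by (auto simp: single_0_ups single_def split: nat.split)
  then have "psubst \<sigma> (psubst (single 0 u) t) =
      psubst (single 0 (psubst \<sigma> u)) (psubst (ups \<sigma>) t)"
    by (simp only: psubst_psubst)
  then show ?case using lbeta.beta[of "psubst (ups \<sigma>) t" "psubst \<sigma> u"] by simp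
qed (auto intro: lbeta.intros)


datatype sty = SBase nat | SArr sty sty

inductive ltyping :: "(nat \<Rightarrow> sty) \<Rightarrow> lam \<Rightarrow> sty \<Rightarrow> bool" where
  LT_Var: "ltyping e (LVar i) (e i)"
| LT_Abs: "ltyping (case_nat T e) t U \<Longrightarrow> ltyping e (LAbs t) (SArr T U)"
| LT_App: "ltyping e s (SArr T U) \<Longrightarrow> ltyping e t T \<Longrightarrow> ltyping e (LApp s t) U"

(* Neutral terms are those whose application never creates a new redex. *)
definition neutral :: "lam \<Rightarrow> bool" where
  "neutral t \<longleftrightarrow> (\<forall>b. t \<noteq> LAbs b)"

fun reducible :: "sty \<Rightarrow> lam \<Rightarrow> bool" where
  "reducible (SBase b) t \<longleftrightarrow> termip lbeta t"
| "reducible (SArr T U) t \<longleftrightarrow> (\<forall>u. reducible T u \<longrightarrow> reducible U (LApp t u))"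

lemma lbeta_LApp_neutral:
  assumes "lbeta (LApp s t) v" and "neutral s"
  shows "(\<exists>s'. lbeta s s' \<and> v = LApp s' t) \<or> (\<exists>t'. lbeta t t' \<and> v = LApp s t')"
  using assms by (auto simp: neutral_def elim: lbeta_LAppE)

lemma reducible_candidate:
  shows reducible_sn: "reducible T t \<Longrightarrow> termip lbeta t"
    and reducible_step: "reducible T t \<Longrightarrow> lbeta t t' \<Longrightarrow> reducible T t'"
    and reducible_neutral:
      "neutral t \<Longrightarrow> (\<And>t'. lbeta t t' \<Longrightarrow> reducible T t') \<Longrightarrow> reducible T t"
proof (induction T arbitrary: t t')
  case (SBase b)
  {
    case 1 then show ?case by (simp only: reducible.simps)
  next
    case 2 then show ?case by (auto intro: accp_downward)
  next
    case 3 then show ?case by (auto intro: accp.accI)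
  }
next
  case (SArr T U)
  have var_reducible: "reducible T (LVar i)" for i
    by (rule SArr.IH(3)) (auto simp: neutral_def)
  {
    case 1
    then have "reducible U (LApp t (LVar 0))" using var_reducible by simp
    then have "termip lbeta (LApp t (LVar 0))" by (rule SArr.IH(4))
    then show ?case by (rule termip_reflect[rotated]) (rule lbeta.appL)
  next
    case 2
    then show ?case using SArr.IH(5) by (auto intro: lbeta.appL)
  next
    case 3
    show ?case
    proof (intro reducible.simps(2)[THEN iffD2] allI impI)
      fix u assume "reducible T u"
      then have "termip lbeta u" by (rule SArr.IH(1))
      then show "reducible U (LApp t u)" using \<open>reducible T u\<close>
      proof (induction rule: accp.induct)
        case (accI u)
        show ?case
        proof (rule SArr.IH(6))
          show "neutral (LApp t u)" by (simp add: neutral_def)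
          fix v assume "lbeta (LApp t u) v"
          with \<open>neutral t\<close> consider
              (head) t' where "lbeta t t'" "v = LApp t' u"
            | (arg) u' where "lbeta u u'" "v = LApp t u'"
            by (blast dest: lbeta_LApp_neutral)
          then show "reducible U v"
          proof cases
            case head
            then show ?thesis using 3 accI.prems by auto
          next
            case arg
            then show ?thesis using accI SArr.IH(2) by auto
          qed
        qed
      qed
    qed
  }
qed

lemma lbeta_redex_cases:
  assumes "lbeta (LApp (LAbs b) u) v"
  obtains (contract) "v = psubst (single 0 u) b"
    | (body) b' where "lbeta b b'" "v = LApp (LAbs b') u"
    | (arg) u' where "lbeta u u'" "v = LApp (LAbs b) u'"
  using assms by (auto elim: lbeta_LAppE)

lemma reducible_LAbs:
  assumes body: "\<And>u. reducible T u \<Longrightarrow> reducible U (psubst (single 0 u) b)"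
  shows "reducible (SArr T U) (LAbs b)"
proof (intro reducible.simps(2)[THEN iffD2] allI impI)
  fix u assume u: "reducible T u"
  have "reducible T (LVar 0)"
    by (rule reducible_neutral) (auto simp: neutral_def)
  then have "termip lbeta (psubst (single 0 (LVar 0)) b)"
    using body reducible_sn by blast
  then have "termip lbeta b"
    by (rule termip_reflect[rotated]) (rule lbeta_psubst)
  then show "reducible U (LApp (LAbs b) u)"
    using body u
  proof (induction b arbitrary: u rule: accp.induct)
    case (accI b)
    note IH_body = accI.IH and body_b = accI.prems(1)
    from \<open>reducible T u\<close> have "termip lbeta u" by (rule reducible_sn)
    then show ?case using \<open>reducible T u\<close>
    proof (induction u rule: accp.induct)
      case (accI u)
      show ?case
      proof (rule reducible_neutral)
        show "neutral (LApp (LAbs b) u)" by (simp add: neutral_def)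
        fix v assume "lbeta (LApp (LAbs b) u) v"
        then show "reducible U v"
        proof (cases rule: lbeta_redex_cases)
          case contract
          then show ?thesis using body_b accI.prems by simp
        next
          case (body b')
          have "reducible U (psubst (single 0 w) b')" if "reducible T w" for w
            using body_b[OF that] \<open>lbeta b b'\<close>
            by (blast intro: reducible_step lbeta_psubst)
          then show ?thesis using IH_body body accI.prems by simp
        next
          case (arg u')
          then show ?thesis using accI reducible_step by simp
        qed
      qed
    qed
  qed
qed

lemma ltyping_reducible:
  assumes "ltyping e t T" and "\<And>i. reducible (e i) (\<sigma> i)"
  shows "reducible T (psubst \<sigma> t)"
  using assms
proof (induction arbitrary: \<sigma> rule: ltyping.induct)
  case (LT_Var e i)
  then show ?case by simp
next
  case (LT_Abs T e t U)
  show ?case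
  proof (simp only: psubst.simps, rule reducible_LAbs)
    fix u assume "reducible T u"
    then have "reducible (case_nat T e i) (case_nat u \<sigma> i)" for i
      using LT_Abs.prems by (cases i) simp_all
    then have "reducible U (psubst (case_nat u \<sigma>) t)" by (rule LT_Abs.IH)
    then show "reducible U (psubst (single 0 u) (psubst (ups \<sigma>) t))"
      by (simp add: psubst_psubst single_0_ups)
  qed
next
  case (LT_App e s T U t)
  then show ?case by simp
qed

theorem ltyping_sn:
  assumes "ltyping e t T"
  shows "termip lbeta t"
proof -
  have "reducible (e i) (LVar i)" for i
    by (rule reducible_neutral) (auto simp: neutral_def)
  with assms have "reducible T (psubst LVar t)" by (rule ltyping_reducible)
  then show ?thesis by (simp add: reducible_sn)
qed


fun erase_ty :: "ty \<Rightarrow> sty" where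
  "erase_ty (Base b) = SBase b"
| "erase_ty (Arr s t) = SArr (erase_ty s) (erase_ty t)"
| "erase_ty (Later a t) = erase_ty t"
| "erase_ty (All t) = erase_ty t"

fun erase :: "trm \<Rightarrow> lam" where
  "erase (Var i) = LVar i"
| "erase (App m n) = LApp (erase m) (erase n)"
| "erase (Lam t m) = LAbs (erase m)"
| "erase (Quote a m) = erase m"
| "erase (Unquote a m) = erase m"
| "erase (TLam m) = erase m"
| "erase (TApp m B) = erase m"

(* The measures decreased by the invisible steps: transition redexes remove a
   transition abstraction and instantiation, quotation redexes a quotation and
   an unquotation (without changing tcount). *)
fun tcount :: "trm \<Rightarrow> nat" where
  "tcount (Var i) = 0"
| "tcount (App m n) = tcount m + tcount n"
| "tcount (Lam t m) = tcount m"
| "tcount (Quote a m) = tcount m"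
| "tcount (Unquote a m) = tcount m"
| "tcount (TLam m) = Suc (tcount m)"
| "tcount (TApp m B) = Suc (tcount m)"

fun qcount :: "trm \<Rightarrow> nat" where
  "qcount (Var i) = 0"
| "qcount (App m n) = qcount m + qcount n"
| "qcount (Lam t m) = qcount m"
| "qcount (Quote a m) = Suc (qcount m)"
| "qcount (Unquote a m) = Suc (qcount m)"
| "qcount (TLam m) = qcount m"
| "qcount (TApp m B) = qcount m"

lemma erase_ty_laters [simp]: "erase_ty (laters B t) = erase_ty t"
  by (induction B) simp_all

lemma erase_ty_tshift [simp]: "erase_ty (tshift k t) = erase_ty t"
  by (induction t arbitrary: k) simp_all

lemma erase_ty_tsubst [simp]: "erase_ty (tsubst k B t) = erase_ty t"
  by (induction t arbitrary: k B) simp_all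

lemma erase_quotes [simp]: "erase (quotes B m) = erase m"
  and tcount_quotes [simp]: "tcount (quotes B m) = tcount m"
  by (induction B arbitrary: m) simp_all

lemma erase_unquotes [simp]: "erase (unquotes B m) = erase m"
  and tcount_unquotes [simp]: "tcount (unquotes B m) = tcount m"
  by (induction B arbitrary: m) simp_all

lemma erase_mshiftT [simp]: "erase (mshiftT k m) = erase m"
  by (induction m arbitrary: k) simp_all

lemma erase_msubstT [simp]: "erase (msubstT k B m) = erase m"
  and tcount_msubstT [simp]: "tcount (msubstT k B m) = tcount m"
  by (induction m arbitrary: k B) simp_all

lemma erase_lift [simp]: "erase (lift k m) = ren (shift_tv k) (erase m)"
proof (induction m arbitrary: k)
  case (Lam t m)
  have "upr (shift_tv k) = shift_tv (Suc k)"
    by (auto simp: upr_def shift_tv_def split: nat.split)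
  with Lam show ?case by simp
qed (simp_all add: shift_tv_def)

lemma erase_subst [simp]: "erase (subst k N m) = psubst (single k (erase N)) (erase m)"
proof (induction m arbitrary: k N)
  case (Lam t m)
  have "shift_tv 0 = Suc" by (simp add: shift_tv_def fun_eq_iff)
  then have "ups (single k (erase N)) = single (Suc k) (erase (lift 0 N))"
    by (auto simp: ups_def single_def split: nat.split)
  with Lam show ?case by simp
qed (simp_all add: single_def)

lemma erase_typing:
  assumes "typing G A M t" and "\<And>i. i < length G \<Longrightarrow> e i = erase_ty (fst (G ! i))"
  shows "ltyping e (erase M) (erase_ty t)"
  using assms
proof (induction arbitrary: e rule: typing.induct)
  case (T_Var i G t A)
  then show ?case using ltyping.LT_Var[of e i] by simp
next
  case (T_Abs t A G m s)
  have "case_nat (erase_ty t) e i = erase_ty (fst (((t, A) # G) ! i))"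
    if "i < length ((t, A) # G)" for i
    using T_Abs.prems that by (cases i) simp_all
  then show ?case using T_Abs.IH by (simp add: ltyping.LT_Abs)
next
  case (T_Gen G A m t)
  have "e i = erase_ty (fst (ctx_shift G ! i))" if "i < length (ctx_shift G)" for i
    using T_Gen.prems that by (simp add: ctx_shift_def case_prod_beta)
  then show ?case using T_Gen.IH by simp
qed (auto intro: ltyping.LT_App)

lemma red_erase:
  "red M N \<Longrightarrow> lbeta (erase M) (erase N) \<or>
     (erase N = erase M \<and>
      ((tcount N, qcount N), (tcount M, qcount M)) \<in> less_than <*lex*> less_than)"
  by (induction rule: red.induct) (auto intro: lbeta.intros simp: single_def)


theorem mainTheorem3:
  assumes "typing G A M t"
  shows "\<not> (\<exists>f. f 0 = M \<and> (\<forall>n. red (f n) (f (Suc n))))"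
proof -
  have "ltyping (\<lambda>i. erase_ty (fst (G ! i))) (erase M) (erase_ty t)"
    using assms by (rule erase_typing) simp
  then have "termip lbeta (erase M)" by (rule ltyping_sn)
  with wf_lex_prod[OF wf_less_than wf_less_than] red_erase have "termip red M"
    by (rule termip_simulation[where g = "\<lambda>N. (tcount N, qcount N)"])
  then show ?thesis by (rule termip_no_infinite_chain)
qed

end
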